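(* Let $\mathcal{A}\subset\mathbb{R}^n$ be a nonempty compact set, $\Xi\subseteq\mathbb{R}^n$, $V:\mathbb{R}^n\to\mathbb{R}_+$ and $\Psi:\mathbb{R}^n\rightrightarrows\mathbb{R}^n$, and assume one of the following two settings holds: (i) $\Xi$ is nonempty, closed and convex, $\mathcal{A}$ is convex, and $V(y)=\tfrac12\|y-\mathbf{P}_{\mathcal{A}}(y)\|^2$; (ii) $\Xi=\mathbb{R}^n$ and $V$ is continuously differentiable with locally Lipschitz gradient, positive definite and radially unbounded with respect to $\mathcal{A}$. Assume $\Psi$ is SPSP with respect to $V$ on $\Xi$, that for every $y\in\Xi$, $\Psi(y)$ is a singleton $\{s(y)\}$, and that for every $\sigma>0$ there exists $L>0$ such that $\|s(y_1)-s(y_2)\|\le L\|y_1-y_2\|$ for all $y_1,y_2\in\Xi\cap\bar B_\sigma(\mathcal{A})$. Then $\mathcal{A}$ is SPAS for the iterative method $y^+=\mathbf{P}_\Xi[y-\alpha s(y)]$ with parameter $\alpha>0$.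
   Context: $\|\cdot\|$ is Euclidean; $\mathbf{P}_S$ is the orthogonal projection onto a nonempty closed convex set $S$. For compact $S$ and $r>0$: $\bar B_r(S)=\{x:\|x-\mathbf{P}_S(x)\|\le r\}$, $B_r(S)=\{x:\|x-\mathbf{P}_S(x)\|<r\}$ (distance to $S$). A function $V$ is positive definite w.r.t. a closed set $S$ if $V=0$ on $S$ and $V>0$ off $S$; it is radially unbounded w.r.t. $S$ (on a set $\Xi$) if for every $B\in\mathbb{R}$ there is $r>0$ with $V(x)>B$ for all $x$ (in $\Xi$) outside $\bar B_r(S)$. SPSP: Let $V:\mathbb{R}^n\to\mathbb{R}_+$ be differentiable, positive definite and radially unbounded w.r.t. compact $\mathcal{A}$, and let $\Xi$ strictly contain $\mathcal{A}$ (every point of $\mathcal{A}$ has an open ball around it contained in $\Xi$). $\Psi$ is semiglobally, practically, strictly pseudogradient (SPSP) w.r.t. $V$ on $\Xi$ if there exist $\epsilon\ge0$, $b\ge0$ such that $\nabla V(y)^Ts\ge -b$ for all $y\in\Xi\cap\bar B_\epsilon(\mathcal{A})$, $s\in\Psi(y)$, and for every $\sigma>\epsilon$ there is a continuous $\phi_{\sigma,\epsilon}:\mathbb{R}^n\to\mathbb{R}$, positive on $\Xi\cap(\bar B_\sigma(\mathcal{A})\setminus B_\epsilon(\mathcal{A}))$ and radially unbounded w.r.t. $\mathcal{A}$ on $\Xi$, with $\nabla V(y)^Ts\ge\phi_{\sigma,\epsilon}(y)$ for all $y\in\Xi\cap(\bar B_\sigma(\mathcal{A})\setminus B_\epsilon(\mathcal{A}))$,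 $s\in\Psi(y)$. SPAS (for the iteration with parameter $\alpha$; statements below concern every sequence $(y(t))_{t\in\mathbb{N}}$ with $y(0)\in\Xi$, $y(t+1)=\mathbf{P}_\Xi[y(t)-\alpha s(y(t))]$): $\mathcal{A}$ is practically stable if for some $\check\rho_s>0$ and every $\rho_s>\check\rho_s$ there exist $\delta>0$ and a nonempty set $P_s\subset(0,\infty)$ such that whenever $\alpha\in P_s$ and $y(0)\in\bar B_\delta(\mathcal{A})\cap\Xi$, $y(t)\in\bar B_{\rho_s}(\mathcal{A})\cap\Xi$ for all $t$. A compact $S$ is uniformly attractive on compact $\Omega$ if for every $\varepsilon>0$ with $\bar B_\varepsilon(S)\cap\Xi\subset\Omega\cap\Xi$ there is $T\in\mathbb{N}$ such that $y(t)\in\bar B_\varepsilon(S)$ whenever $y(0)\in\Omega$ and $t\ge T$. $\mathcal{A}$ is semiglobally practically attractive if for some $\check\rho_a>0$ and all $\sigma>\rho_a>\check\rho_a$ there is a nonempty $P_a\subset(0,\infty)$ such that whenever $\alpha\in P_a$, $\bar B_{\rho_a}(\mathcal{A})$ is uniformly attractive on $\bar B_\sigma(\mathcal{A})$. $\mathcal{A}$ is SPAS (semiglobally practically asymptotically stable) if it is practically stable and semiglobally practically attractive. *)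

theory Defs
  imports "HOL-Analysis.Analysis"
begin

definition cnbhd :: "'a::euclidean_space set \<Rightarrow> real \<Rightarrow> 'a set" where
  "cnbhd S r = {x. infdist x S \<le> r}"

definition onbhd :: "'a::euclidean_space set \<Rightarrow> real \<Rightarrow> 'a set" where
  "onbhd S r = {x. infdist x S < r}"

definition pos_def_wrt :: "('a::euclidean_space \<Rightarrow> real) \<Rightarrow> 'a set \<Rightarrow> bool" where
  "pos_def_wrt V S \<longleftrightarrow> (\<forall>x\<in>S. V x = 0) \<and> (\<forall>x. x \<notin> S \<longrightarrow> V x > 0)"

definition rad_unbounded_on :: "('a::euclidean_space \<Rightarrow> real) \<Rightarrow> 'a set \<Rightarrow> 'a set \<Rightarrow> bool" where
  "rad_unbounded_on V S Xi \<longleftrightarrow>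
     (\<forall>B::real. \<exists>r>0. \<forall>x\<in>Xi. x \<notin> cnbhd S r \<longrightarrow> V x > B)"

definition strictly_contains :: "'a::euclidean_space set \<Rightarrow> 'a set \<Rightarrow> bool" where
  "strictly_contains Xi A \<longleftrightarrow> (\<forall>a\<in>A. \<exists>e>0. ball a e \<subseteq> Xi)"

text \<open>Semiglobal, practical, strict pseudogradient. The term grad V(y)^T s is the
  Frechet derivative of V at y applied to s.\<close>
definition SPSP :: "('a::euclidean_space \<Rightarrow> 'a set) \<Rightarrow> ('a \<Rightarrow> real) \<Rightarrow> 'a set \<Rightarrow> 'a set \<Rightarrow> bool" where
  "SPSP Psi V A Xi \<longleftrightarrow>
     (\<forall>y. V differentiable (at y)) \<and> pos_def_wrt V A \<and> rad_unbounded_on V A UNIV \<and>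
     strictly_contains Xi A \<and>
     (\<exists>\<epsilon>\<ge>0. \<exists>b\<ge>0.
        (\<forall>y\<in>Xi \<inter> cnbhd A \<epsilon>. \<forall>s\<in>Psi y. frechet_derivative V (at y) s \<ge> - b) \<and>
        (\<forall>\<sigma>>\<epsilon>. \<exists>\<phi>::'a \<Rightarrow> real.
           continuous_on UNIV \<phi> \<and>
           (\<forall>y\<in>Xi \<inter> (cnbhd A \<sigma> - onbhd A \<epsilon>). \<phi> y > 0) \<and>
           rad_unbounded_on \<phi> A Xi \<and>
           (\<forall>y\<in>Xi \<inter> (cnbhd A \<sigma> - onbhd A \<epsilon>). \<forall>s\<in>Psi y. frechet_derivative V (at y) s \<ge> \<phi> y)))"

definition is_traj :: "'a::euclidean_space set \<Rightarrow> ('a \<Rightarrow> 'a) \<Rightarrow> real \<Rightarrow> (nat \<Rightarrow> 'a) \<Rightarrow> bool" where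
  "is_traj Xi s \<alpha> y \<longleftrightarrow> y 0 \<in> Xi \<and> (\<forall>t. y (Suc t) = closest_point Xi (y t - \<alpha> *\<^sub>R s (y t)))"

definition practically_stable :: "'a::euclidean_space set \<Rightarrow> 'a set \<Rightarrow> ('a \<Rightarrow> 'a) \<Rightarrow> bool" where
  "practically_stable A Xi s \<longleftrightarrow>
     (\<exists>rho_c>0. \<forall>rho_s>rho_c. \<exists>\<delta>>0. \<exists>Ps. Ps \<noteq> {} \<and> Ps \<subseteq> {0<..} \<and>
        (\<forall>\<alpha>\<in>Ps. \<forall>y. is_traj Xi s \<alpha> y \<and> y 0 \<in> cnbhd A \<delta> \<inter> Xi \<longrightarrow>
            (\<forall>t. y t \<in> cnbhd A rho_s \<inter> Xi)))"

definition unif_attractive :: "'a::euclidean_space set \<Rightarrow> 'a set \<Rightarrow> 'a set \<Rightarrow> ('a \<Rightarrow> 'a) \<Rightarrow> real \<Rightarrow> bool" where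
  "unif_attractive S \<Omega> Xi s \<alpha> \<longleftrightarrow>
     (\<forall>\<epsilon>>0. cnbhd S \<epsilon> \<inter> Xi \<subseteq> \<Omega> \<inter> Xi \<longrightarrow>
        (\<exists>T::nat. \<forall>y. is_traj Xi s \<alpha> y \<and> y 0 \<in> \<Omega> \<longrightarrow> (\<forall>t\<ge>T. y t \<in> cnbhd S \<epsilon>)))"

definition semiglobally_practically_attractive :: "'a::euclidean_space set \<Rightarrow> 'a set \<Rightarrow> ('a \<Rightarrow> 'a) \<Rightarrow> bool" where
  "semiglobally_practically_attractive A Xi s \<longleftrightarrow>
     (\<exists>rho_c>0. \<forall>\<sigma> rho_a. \<sigma> > rho_a \<and> rho_a > rho_c \<longrightarrow>
        (\<exists>Pa. Pa \<noteq> {} \<and> Pa \<subseteq> {0<..} \<and>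
           (\<forall>\<alpha>\<in>Pa. unif_attractive (cnbhd A rho_a) (cnbhd A \<sigma>) Xi s \<alpha>)))"

definition SPAS :: "'a::euclidean_space set \<Rightarrow> 'a set \<Rightarrow> ('a \<Rightarrow> 'a) \<Rightarrow> bool" where
  "SPAS A Xi s \<longleftrightarrow> practically_stable A Xi s \<and> semiglobally_practically_attractive A Xi s"

end

theory Submission
  imports Defs
begin

text \<open>In both settings one projected step obeys, on every bounded neighbourhood of \<open>A\<close>,
  the descent inequality \<open>V(P(y - \<alpha> s y)) \<le> V y - \<alpha> \<nabla>V(y)\<^sup>T s(y) + \<alpha>\<^sup>2 C\<close>.
  Away from the \<open>\<epsilon>\<close>-neighbourhood the SPSP bound, made uniform by compactness, lets the
  first-order term win for small \<open>\<alpha>\<close>, so \<open>V\<close> drops by a fixed amount per step; inside it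
  the step raises \<open>V\<close> by at most \<open>\<alpha>(b + C) \<le> 1\<close>. Hence a fixed sublevel set of \<open>V\<close> is
  invariant and is reached from any larger one in a bounded number of steps, and radial
  unboundedness turns sublevel sets into neighbourhoods of \<open>A\<close>.\<close>

lemma closed_cnbhd: "closed (cnbhd A r)"
  unfolding cnbhd_def by (intro closed_Collect_le continuous_intros)

lemma compact_cnbhd:
  fixes A :: "'a::euclidean_space set"
  assumes "compact A" "A \<noteq> {}"
  shows "compact (cnbhd A r)"
proof -
  have "compact (cnbhd A (max r 1))"
    unfolding cnbhd_def using compact_infdist_le[OF assms(2,1)] by simp
  moreover have "cnbhd A r = cnbhd A (max r 1) \<inter> cnbhd A r"
    by (auto simp: cnbhd_def)
  ultimately show ?thesis
    by (metis closed_cnbhd compact_Int_closed)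
qed

lemma compact_annulus:
  fixes A Xi :: "'a::euclidean_space set"
  assumes "compact A" "A \<noteq> {}" "closed Xi"
  shows "compact (Xi \<inter> (cnbhd A \<sigma> - onbhd A \<epsilon>))"
proof -
  have "Xi \<inter> (cnbhd A \<sigma> - onbhd A \<epsilon>) = cnbhd A \<sigma> \<inter> (Xi \<inter> {x. \<epsilon> \<le> infdist x A})"
    by (auto simp: cnbhd_def onbhd_def)
  moreover have "closed {x. \<epsilon> \<le> infdist x A}"
    by (intro closed_Collect_le continuous_intros)
  ultimately show ?thesis
    using compact_cnbhd[OF assms(1,2)] assms(3) by (simp add: compact_Int_closed closed_Int)
qed

lemma sublevel_subset_cnbhd:
  assumes "rad_unbounded_on V A UNIV"
  shows "\<exists>r>0. \<forall>y. V y \<le> c \<longrightarrow> y \<in> cnbhd A r"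
  using assms unfolding rad_unbounded_on_def by (meson UNIV_I not_le)

lemma bounded_above_on_cnbhd:
  fixes A :: "'a::euclidean_space set" and f :: "'a \<Rightarrow> real"
  assumes "continuous_on UNIV f" "compact A" "A \<noteq> {}"
  shows "\<exists>W. \<forall>y\<in>cnbhd A r. f y \<le> W"
proof -
  have "bounded (f ` cnbhd A r)"
    by (intro compact_imp_bounded compact_continuous_image continuous_on_subset[OF assms(1)]
        compact_cnbhd assms(2,3)) auto
  then obtain W where "\<forall>y\<in>cnbhd A r. norm (f y) \<le> W"
    by (auto simp: bounded_iff)
  then show ?thesis by (metis abs_ge_self order_trans real_norm_def)
qed

lemma compact_pos_bounded_below:
  fixes \<phi> :: "'a::topological_space \<Rightarrow> real"
  assumes "compact S" "continuous_on S \<phi>" "\<forall>y\<in>S. 0 < \<phi> y"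
  shows "\<exists>m>0. \<forall>y\<in>S. m \<le> \<phi> y"
proof (cases "S = {}")
  case False
  then obtain x where "x \<in> S" "\<forall>y\<in>S. \<phi> x \<le> \<phi> y"
    using continuous_attains_inf[OF assms(1) _ assms(2)] by blast
  then show ?thesis using assms(3) by blast
qed (auto intro: exI[of _ 1])

lemma norm_bounded_if_lipschitz_at:
  fixes s :: "'a::real_normed_vector \<Rightarrow> 'b::real_normed_vector"
  assumes "bounded S" "a \<in> S" "0 \<le> L" "\<forall>y\<in>S. norm (s y - s a) \<le> L * norm (y - a)"
  shows "\<exists>M\<ge>0. \<forall>y\<in>S. norm (s y) \<le> M"
proof -
  obtain B where B: "\<forall>y\<in>S. norm y \<le> B" using assms(1) bounded_iff by blast
  have "norm (s y) \<le> norm (s a) + L * (2 * B)" if "y \<in> S" for y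
  proof -
    have "norm y \<le> B" "norm a \<le> B" using B that assms(2) by auto
    then have "norm (y - a) \<le> 2 * B" using norm_triangle_ineq4[of y a] by linarith
    then have "norm (s y - s a) \<le> L * (2 * B)"
      using assms(3,4) that by (meson mult_left_mono order_trans)
    then show ?thesis using norm_triangle_sub[of "s y" "s a"] by linarith
  qed
  moreover have "0 \<le> B" using B assms(2) norm_ge_zero order_trans by blast
  ultimately show ?thesis using assms(3) by (intro exI[of _ "norm (s a) + L * (2 * B)"]) auto
qed

lemma infdist_eq_dist_closest_point:
  fixes S :: "'a::euclidean_space set"
  assumes "closed S" "S \<noteq> {}"
  shows "infdist a S = dist a (closest_point S a)"
  by (simp add: assms infdist_eq_setdist setdist_closest_point)

lemma infdist_add_sq_le:
  fixes A :: "'a::euclidean_space set"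
  assumes "closed A" "A \<noteq> {}"
  shows "(infdist (y + k) A)\<^sup>2 \<le> (infdist y A)\<^sup>2 + 2 * ((y - closest_point A y) \<bullet> k) + (norm k)\<^sup>2"
proof -
  define g where "g = y - closest_point A y"
  have "infdist (y + k) A \<le> norm (g + k)"
    using infdist_le[OF closest_point_in_set[OF assms]] by (simp add: g_def dist_norm algebra_simps)
  then have "(infdist (y + k) A)\<^sup>2 \<le> (norm (g + k))\<^sup>2"
    by (simp add: infdist_nonneg power_mono)
  also have "\<dots> = (norm g)\<^sup>2 + 2 * (g \<bullet> k) + (norm k)\<^sup>2"
    by (simp add: power2_norm_eq_inner inner_add inner_commute)
  also have "norm g = infdist y A"
    by (simp add: g_def infdist_eq_dist_closest_point[OF assms] dist_norm)
  finally show ?thesis by (simp add: g_def)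
qed

lemma infdist_closest_point_le:
  fixes A Xi :: "'a::euclidean_space set"
  assumes "closed A" "A \<noteq> {}" "convex Xi" "closed Xi" "A \<subseteq> Xi"
  shows "infdist (closest_point Xi z) A \<le> infdist z A"
proof -
  define a where "a = closest_point A z"
  have a: "a \<in> A" unfolding a_def using closest_point_in_set[OF assms(1,2)] .
  then have "infdist (closest_point Xi z) A \<le> dist (closest_point Xi z) (closest_point Xi a)"
    using infdist_le closest_point_self[of a Xi] assms(5) by fastforce
  also have "\<dots> \<le> dist z a"
    using closest_point_lipschitz[OF assms(3,4)] assms(2,5) by blast
  also have "\<dots> = infdist z A"
    by (simp add: a_def infdist_eq_dist_closest_point[OF assms(1,2)])
  finally show ?thesis .
qed

lemma frechet_derivative_eq_if_quadratic_upper_bound: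
  fixes f :: "'a::real_normed_vector \<Rightarrow> real"
  assumes "f differentiable (at y)" "\<forall>k. f (y + k) \<le> f y + g k + K * (norm k)\<^sup>2" "linear g"
  shows "frechet_derivative f (at y) h = g h"
proof -
  define D where "D = frechet_derivative f (at y)"
  have Dd: "(f has_derivative D) (at y)" using assms(1) D_def frechet_derivative_works by blast
  have "((\<lambda>t::real. y + t *\<^sub>R h) has_derivative (\<lambda>t. t *\<^sub>R h)) (at 0)"
    by (auto intro!: derivative_eq_intros)
  then have "((f \<circ> (\<lambda>t. y + t *\<^sub>R h)) has_derivative (D \<circ> (\<lambda>t. t *\<^sub>R h))) (at 0)"
    by (rule diff_chain_at) (use Dd in simp)
  moreover have "D (t *\<^sub>R h) = t * D h" for t
    using linear_cmul[OF has_derivative_linear[OF Dd]] by simp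
  ultimately have "((\<lambda>t. f (y + t *\<^sub>R h)) has_real_derivative D h) (at 0)"
    by (simp add: has_field_derivative_def o_def mult_commute_abs)
  moreover define F where "F t = f (y + t *\<^sub>R h) - f y - t * g h - t\<^sup>2 * (K * (norm h)\<^sup>2)" for t
  ultimately have F_deriv: "(F has_real_derivative (D h - g h)) (at 0)"
    unfolding F_def by (auto intro!: derivative_eq_intros)
  have F_max: "F t \<le> F 0" for t
    using assms(2)[rule_format, of "t *\<^sub>R h"] linear_cmul[OF assms(3)]
    by (simp add: F_def power_mult_distrib mult_ac)
  have "D h - g h = 0"
    by (rule DERIV_local_max[OF F_deriv zero_less_one]) (simp add: F_max)
  then show ?thesis by (simp add: D_def)
qed

lemma projected_step_half_sq_dist_le:
  fixes A Xi :: "'a::euclidean_space set" and V :: "'a \<Rightarrow> real"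
  assumes "closed A" "A \<noteq> {}" "convex Xi" "closed Xi" "A \<subseteq> Xi"
    and V_def: "V = (\<lambda>y. (1/2) * (norm (y - closest_point A y))\<^sup>2)"
    and "V differentiable (at y)"
  shows "V (closest_point Xi (y - \<alpha> *\<^sub>R h))
           \<le> V y - \<alpha> * frechet_derivative V (at y) h + \<alpha>\<^sup>2 / 2 * (norm h)\<^sup>2"
proof -
  have V_infdist: "V x = (infdist x A)\<^sup>2 / 2" for x
    by (simp add: V_def infdist_eq_dist_closest_point[OF assms(1,2)] dist_norm)
  define g where "g = y - closest_point A y"
  have quad: "V (y + k) \<le> V y + g \<bullet> k + 1/2 * (norm k)\<^sup>2" for k
    using infdist_add_sq_le[OF assms(1,2), of y k] by (simp add: V_infdist g_def)
  \<comment> \<open>No convexity of \<open>A\<close> is needed: differentiability and the quadratic upper bound identify the gradient.\<close>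
  have deriv: "frechet_derivative V (at y) h = g \<bullet> h"
    using quad by (intro frechet_derivative_eq_if_quadratic_upper_bound[OF assms(7)]
        bounded_linear.linear[OF bounded_linear_inner_right]) blast
  have "V (closest_point Xi (y - \<alpha> *\<^sub>R h)) \<le> V (y + (- \<alpha>) *\<^sub>R h)"
    using infdist_closest_point_le[OF assms(1-5)] by (simp add: V_infdist infdist_nonneg power_mono)
  also have "\<dots> \<le> V y - \<alpha> * (g \<bullet> h) + \<alpha>\<^sup>2 / 2 * (norm h)\<^sup>2"
    using quad[of "(- \<alpha>) *\<^sub>R h"] by (simp add: power_mult_distrib)
  finally show ?thesis by (simp add: deriv)
qed

lemma lipschitz_gradient_descent:
  fixes V :: "'a::euclidean_space \<Rightarrow> real" and gV :: "'a \<Rightarrow> 'a"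
  assumes der: "\<forall>y. (V has_derivative (\<lambda>h. gV y \<bullet> h)) (at y)"
    and lip: "Lg-lipschitz_on K gV"
    and seg: "\<forall>t. 0 \<le> t \<and> t \<le> \<alpha> \<longrightarrow> y - t *\<^sub>R h \<in> K" and "0 \<le> \<alpha>"
  shows "V (y - \<alpha> *\<^sub>R h) \<le> V y - \<alpha> * (gV y \<bullet> h) + \<alpha>\<^sup>2 * Lg * (norm h)\<^sup>2"
proof -
  have deriv: "((\<lambda>t. V (y - t *\<^sub>R h)) has_derivative (\<lambda>d. d * (gV (y - x *\<^sub>R h) \<bullet> (-h))))
      (at x within {0..\<alpha>})" for x
  proof -
    have line: "((\<lambda>t::real. y - t *\<^sub>R h) has_derivative (\<lambda>t. - (t *\<^sub>R h))) (at x)"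
      by (auto intro!: derivative_eq_intros)
    have "(V has_derivative (\<lambda>k. gV (y - x *\<^sub>R h) \<bullet> k)) (at ((\<lambda>t::real. y - t *\<^sub>R h) x))"
      using der by simp
    from diff_chain_at[OF line this]
    have "((\<lambda>t. V (y - t *\<^sub>R h)) has_derivative (\<lambda>d. d * (gV (y - x *\<^sub>R h) \<bullet> (-h)))) (at x)"
      by (simp add: o_def inner_minus_right)
    then show ?thesis by (rule has_derivative_at_withinI)
  qed
  obtain x where x: "x \<in> {0..\<alpha>}"
    and mvt: "V (y - \<alpha> *\<^sub>R h) - V (y - 0 *\<^sub>R h) = (\<alpha> - 0) * (gV (y - x *\<^sub>R h) \<bullet> (-h))"
    using mvt_very_simple[OF \<open>0 \<le> \<alpha>\<close>, of "\<lambda>t. V (y - t *\<^sub>R h)", OF deriv] by blast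
  have "y \<in> K" "y - x *\<^sub>R h \<in> K"
    using seg[rule_format, of 0] seg x \<open>0 \<le> \<alpha>\<close> by auto
  from lipschitz_onD[OF lip this]
  have "norm (gV y - gV (y - x *\<^sub>R h)) \<le> Lg * norm (x *\<^sub>R h)"
    by (simp add: dist_norm)
  also have "\<dots> \<le> Lg * (\<alpha> * norm h)"
    using x lipschitz_on_nonneg[OF lip] by (auto intro!: mult_left_mono mult_right_mono)
  finally have "(gV y - gV (y - x *\<^sub>R h)) \<bullet> h \<le> Lg * (\<alpha> * norm h) * norm h"
    by (meson norm_cauchy_schwarz mult_right_mono norm_ge_zero order_trans)
  then have "\<alpha> * ((gV y - gV (y - x *\<^sub>R h)) \<bullet> h) \<le> \<alpha> * (Lg * (\<alpha> * norm h) * norm h)"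
    using \<open>0 \<le> \<alpha>\<close> by (rule mult_left_mono)
  moreover have "V (y - \<alpha> *\<^sub>R h) = V y - \<alpha> * (gV y \<bullet> h) + \<alpha> * ((gV y - gV (y - x *\<^sub>R h)) \<bullet> h)"
    using mvt by (simp add: inner_diff_left algebra_simps)
  ultimately show ?thesis by (simp add: power2_eq_square mult_ac)
qed

lemma lipschitz_on_compact_if_locally_lipschitz:
  fixes g :: "'a::euclidean_space \<Rightarrow> 'b::metric_space"
  assumes loc: "\<forall>x. \<exists>e>0. \<exists>L. L-lipschitz_on (ball x e) g" and "compact K"
  shows "\<exists>L. L-lipschitz_on K g"
proof -
  have "local_lipschitz {0::real} K (\<lambda>_. g)"
  proof (rule local_lipschitzI)
    fix x assume "x \<in> K"
    obtain e L where e: "e > 0" "L-lipschitz_on (ball x e) g" using loc by blast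
    have "L-lipschitz_on (cball x (e/2) \<inter> K) g"
      by (rule lipschitz_on_subset[OF e(2)]) (use e in auto)
    then show "\<exists>u>0. \<exists>L. \<forall>t\<in>cball t u \<inter> {0}. L-lipschitz_on (cball x u \<inter> K) g" for t
      using e by (intro exI[of _ "e/2"]) auto
  qed
  then obtain L where "\<And>t. t \<in> {0::real} \<Longrightarrow> L-lipschitz_on K g"
    using local_lipschitz_compact_implies_lipschitz[OF _ \<open>compact K\<close> compact_sing] by auto
  then show ?thesis by blast
qed

definition step_descent_bound ::
    "'a::euclidean_space set \<Rightarrow> 'a set \<Rightarrow> ('a \<Rightarrow> real) \<Rightarrow> ('a \<Rightarrow> 'a) \<Rightarrow> real \<Rightarrow> real \<Rightarrow> bool" where
  "step_descent_bound A Xi V s R C \<longleftrightarrow>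
     (\<forall>\<alpha> y. 0 < \<alpha> \<and> \<alpha> \<le> 1 \<and> y \<in> Xi \<and> infdist y A \<le> R \<longrightarrow>
        V (closest_point Xi (y - \<alpha> *\<^sub>R s y))
          \<le> V y - \<alpha> * frechet_derivative V (at y) (s y) + \<alpha>\<^sup>2 * C)"

lemma step_descent_bound_half_sq_dist:
  fixes A Xi :: "'a::euclidean_space set" and V :: "'a \<Rightarrow> real"
  assumes "closed A" "A \<noteq> {}" "convex Xi" "closed Xi" "A \<subseteq> Xi"
    and "V = (\<lambda>y. (1/2) * (norm (y - closest_point A y))\<^sup>2)"
    and "\<forall>y. V differentiable (at y)"
    and s_bound: "\<forall>y\<in>Xi. infdist y A \<le> R \<longrightarrow> norm (s y) \<le> M"
  shows "step_descent_bound A Xi V s R (M\<^sup>2 / 2)"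
  unfolding step_descent_bound_def
proof (intro allI impI)
  fix \<alpha> :: real and y assume y: "0 < \<alpha> \<and> \<alpha> \<le> 1 \<and> y \<in> Xi \<and> infdist y A \<le> R"
  have "(norm (s y))\<^sup>2 \<le> M\<^sup>2"
    using s_bound y by (simp add: power_mono)
  then have "\<alpha>\<^sup>2 / 2 * (norm (s y))\<^sup>2 \<le> \<alpha>\<^sup>2 * (M\<^sup>2 / 2)"
    by (simp add: mult_left_mono)
  moreover have "V (closest_point Xi (y - \<alpha> *\<^sub>R s y))
      \<le> V y - \<alpha> * frechet_derivative V (at y) (s y) + \<alpha>\<^sup>2 / 2 * (norm (s y))\<^sup>2"
    using assms(7) by (intro projected_step_half_sq_dist_le[OF assms(1-6)]) blast
  ultimately show "V (closest_point Xi (y - \<alpha> *\<^sub>R s y))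
      \<le> V y - \<alpha> * frechet_derivative V (at y) (s y) + \<alpha>\<^sup>2 * (M\<^sup>2 / 2)"
    by linarith
qed

lemma step_descent_bound_lipschitz_gradient:
  fixes A :: "'a::euclidean_space set" and V :: "'a \<Rightarrow> real" and gV :: "'a \<Rightarrow> 'a"
  assumes "compact A" "A \<noteq> {}"
    and der: "\<forall>y. (V has_derivative (\<lambda>h. gV y \<bullet> h)) (at y)"
    and "\<forall>x. \<exists>e>0. \<exists>L. L-lipschitz_on (ball x e) gV"
    and "0 \<le> M" and s_bound: "\<forall>y. infdist y A \<le> R \<longrightarrow> norm (s y) \<le> M"
  shows "\<exists>C\<ge>0. step_descent_bound A UNIV V s R C"
proof -
  obtain Lg where Lg: "Lg-lipschitz_on (cnbhd A (R + M)) gV"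
    using lipschitz_on_compact_if_locally_lipschitz[OF assms(4) compact_cnbhd[OF assms(1,2)]] by blast
  have "step_descent_bound A UNIV V s R (Lg * M\<^sup>2)"
    unfolding step_descent_bound_def
  proof (intro allI impI)
    fix \<alpha> :: real and y assume y: "0 < \<alpha> \<and> \<alpha> \<le> 1 \<and> y \<in> UNIV \<and> infdist y A \<le> R"
    have sy: "norm (s y) \<le> M" using s_bound y by blast
    have "y - t *\<^sub>R s y \<in> cnbhd A (R + M)" if "0 \<le> t \<and> t \<le> \<alpha>" for t
    proof -
      have "t * norm (s y) \<le> 1 * M" using that y sy by (intro mult_mono) auto
      then show ?thesis
        using infdist_triangle[of "y - t *\<^sub>R s y" A y] that y by (simp add: cnbhd_def dist_norm)
    qed
    then have "V (y - \<alpha> *\<^sub>R s y) \<le> V y - \<alpha> * (gV y \<bullet> s y) + \<alpha>\<^sup>2 * Lg * (norm (s y))\<^sup>2"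
      using lipschitz_gradient_descent[OF der Lg] y by auto
    moreover have "(norm (s y))\<^sup>2 \<le> M\<^sup>2" using sy by (simp add: power_mono)
    then have "\<alpha>\<^sup>2 * (Lg * (norm (s y))\<^sup>2) \<le> \<alpha>\<^sup>2 * (Lg * M\<^sup>2)"
      using lipschitz_on_nonneg[OF Lg] by (intro mult_left_mono) auto
    moreover have "frechet_derivative V (at y) = (\<lambda>h. gV y \<bullet> h)"
      using der frechet_derivative_at by metis
    ultimately show "V (closest_point UNIV (y - \<alpha> *\<^sub>R s y))
        \<le> V y - \<alpha> * frechet_derivative V (at y) (s y) + \<alpha>\<^sup>2 * (Lg * M\<^sup>2)"
      by (simp add: closest_point_self mult.assoc)
  qed
  then show ?thesis
    using lipschitz_on_nonneg[OF Lg] by (intro exI[of _ "Lg * M\<^sup>2"]) simp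
qed

lemma is_traj_in:
  assumes "closed Xi" "is_traj Xi s \<alpha> y"
  shows "y t \<in> Xi"
proof (cases t)
  case (Suc t')
  have "Xi \<noteq> {}" using assms(2) by (auto simp: is_traj_def)
  then show ?thesis
    using assms Suc closest_point_in_set by (simp add: is_traj_def)
qed (use assms in \<open>simp add: is_traj_def\<close>)

lemma is_traj_sublevel_bound:
  assumes traj: "is_traj Xi s \<alpha> y" "closed Xi"
    and "V (y 0) \<le> c" "c0 \<le> c" "0 \<le> \<kappa>"
    and step: "\<forall>z\<in>Xi. V z \<le> c \<longrightarrow> V (closest_point Xi (z - \<alpha> *\<^sub>R s z)) \<le> max c0 (V z - \<kappa>)"
  shows "V (y t) \<le> max c0 (c - real t * \<kappa>)"
proof (induction t)
  case 0
  then show ?case using assms(3) by simp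
next
  case (Suc t)
  have "0 \<le> real t * \<kappa>" using assms(5) by simp
  then have "V (y t) \<le> c"
    using Suc.IH assms(4) by (auto simp: le_max_iff_disj)
  then have "V (y (Suc t)) \<le> max c0 (V (y t) - \<kappa>)"
    using step is_traj_in[OF traj(2,1)] traj(1) by (simp add: is_traj_def)
  also have "\<dots> \<le> max c0 (c - real (Suc t) * \<kappa>)"
    using Suc.IH assms(5) by (auto simp: le_max_iff_disj algebra_simps)
  finally show ?case .
qed

lemma SPSP_single_valued_bounds:
  fixes A Xi :: "'a::euclidean_space set"
  assumes "SPSP Psi V A Xi" "compact A" "A \<noteq> {}" "closed Xi" "\<forall>y\<in>Xi. Psi y = {s y}"
  shows "\<exists>\<epsilon>\<ge>0. \<exists>b\<ge>0.
           (\<forall>y\<in>Xi. infdist y A \<le> \<epsilon> \<longrightarrow> - b \<le> frechet_derivative V (at y) (s y)) \<and>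
           (\<forall>\<sigma>>\<epsilon>. \<exists>m>0. \<forall>y\<in>Xi. \<epsilon> \<le> infdist y A \<and> infdist y A \<le> \<sigma> \<longrightarrow>
              m \<le> frechet_derivative V (at y) (s y))"
proof -
  obtain \<epsilon> b where "\<epsilon> \<ge> 0" "b \<ge> 0"
    and near: "\<forall>y\<in>Xi \<inter> cnbhd A \<epsilon>. \<forall>z\<in>Psi y. frechet_derivative V (at y) z \<ge> - b"
    and far: "\<forall>\<sigma>>\<epsilon>. \<exists>\<phi>::'a \<Rightarrow> real. continuous_on UNIV \<phi> \<and>
           (\<forall>y\<in>Xi \<inter> (cnbhd A \<sigma> - onbhd A \<epsilon>). \<phi> y > 0) \<and> rad_unbounded_on \<phi> A Xi \<and>
           (\<forall>y\<in>Xi \<inter> (cnbhd A \<sigma> - onbhd A \<epsilon>). \<forall>z\<in>Psi y. frechet_derivative V (at y) z \<ge> \<phi> y)"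
    using assms(1) unfolding SPSP_def by blast
  have "\<exists>m>0. \<forall>y\<in>Xi. \<epsilon> \<le> infdist y A \<and> infdist y A \<le> \<sigma> \<longrightarrow> m \<le> frechet_derivative V (at y) (s y)"
    if "\<sigma> > \<epsilon>" for \<sigma>
  proof -
    from far[rule_format, OF that]
    obtain \<phi> :: "'a \<Rightarrow> real" where cont: "continuous_on UNIV \<phi>"
      and pos: "\<forall>y\<in>Xi \<inter> (cnbhd A \<sigma> - onbhd A \<epsilon>). \<phi> y > 0"
      and dec: "\<forall>y\<in>Xi \<inter> (cnbhd A \<sigma> - onbhd A \<epsilon>). \<forall>z\<in>Psi y. frechet_derivative V (at y) z \<ge> \<phi> y"
      by blast
    obtain m where "m > 0" and m: "\<forall>y\<in>Xi \<inter> (cnbhd A \<sigma> - onbhd A \<epsilon>). m \<le> \<phi> y"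
      using compact_pos_bounded_below[OF compact_annulus[OF assms(2-4)]
          continuous_on_subset[OF cont subset_UNIV] pos] by blast
    have "m \<le> frechet_derivative V (at y) (s y)"
      if "y \<in> Xi" "\<epsilon> \<le> infdist y A" "infdist y A \<le> \<sigma>" for y
    proof -
      have "y \<in> Xi \<inter> (cnbhd A \<sigma> - onbhd A \<epsilon>)"
        using that by (simp add: cnbhd_def onbhd_def)
      then have "m \<le> \<phi> y" "\<phi> y \<le> frechet_derivative V (at y) (s y)"
        using m dec assms(5) that(1) by auto
      then show ?thesis by linarith
    qed
    then show ?thesis using \<open>m > 0\<close> by blast
  qed
  moreover have "\<forall>y\<in>Xi. infdist y A \<le> \<epsilon> \<longrightarrow> - b \<le> frechet_derivative V (at y) (s y)"
    using near assms(5) by (simp add: cnbhd_def)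
  ultimately show ?thesis using \<open>\<epsilon> \<ge> 0\<close> \<open>b \<ge> 0\<close> by blast
qed

locale practical_descent =
  fixes A Xi :: "'a::euclidean_space set" and V :: "'a \<Rightarrow> real" and s :: "'a \<Rightarrow> 'a"
    and \<epsilon> b :: real
  assumes compact_A: "compact A" and A_ne: "A \<noteq> {}" and closed_Xi: "closed Xi"
    and V_nonneg: "\<forall>x. 0 \<le> V x" and V_cont: "continuous_on UNIV V"
    and V_rad: "rad_unbounded_on V A UNIV"
    and eps_nonneg: "0 \<le> \<epsilon>" and b_nonneg: "0 \<le> b"
    and near: "\<forall>y\<in>Xi. infdist y A \<le> \<epsilon> \<longrightarrow> - b \<le> frechet_derivative V (at y) (s y)"
    and far: "\<forall>\<sigma>>\<epsilon>. \<exists>m>0. \<forall>y\<in>Xi. \<epsilon> \<le> infdist y A \<and> infdist y A \<le> \<sigma> \<longrightarrow>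
                m \<le> frechet_derivative V (at y) (s y)"
    and descent: "\<forall>R>0. \<exists>C\<ge>0. step_descent_bound A Xi V s R C"
begin

lemma uniform_step_decrease:
  assumes near_level: "\<forall>y. infdist y A \<le> \<epsilon> \<longrightarrow> V y + 1 \<le> c0"
  shows "\<exists>\<alpha>0>0. \<exists>\<kappa>>0. \<forall>\<alpha>. 0 < \<alpha> \<and> \<alpha> \<le> \<alpha>0 \<longrightarrow>
           (\<forall>y\<in>Xi. V y \<le> c \<longrightarrow> V (closest_point Xi (y - \<alpha> *\<^sub>R s y)) \<le> max c0 (V y - \<alpha> * \<kappa>))"
proof -
  obtain R0 where R0: "\<forall>y. V y \<le> c \<longrightarrow> y \<in> cnbhd A R0"
    using sublevel_subset_cnbhd[OF V_rad] by blast
  define R where "R = max R0 (\<epsilon> + 1)"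
  have "\<epsilon> < R" "0 < R" using eps_nonneg by (auto simp: R_def)
  obtain C where "0 \<le> C" and C: "step_descent_bound A Xi V s R C"
    using descent \<open>0 < R\<close> by blast
  obtain m where "0 < m" and m: "\<forall>y\<in>Xi. \<epsilon> \<le> infdist y A \<and> infdist y A \<le> R \<longrightarrow>
      m \<le> frechet_derivative V (at y) (s y)"
    using far \<open>\<epsilon> < R\<close> by blast
  \<comment> \<open>The second bound keeps the increase near \<open>A\<close> below 1, the third lets \<open>\<alpha> m\<close> dominate \<open>\<alpha>\<^sup>2 C\<close>.\<close>
  define \<alpha>0 where "\<alpha>0 = min 1 (min (1 / (b + C + 1)) (m / (2 * (C + 1))))"
  have "0 < \<alpha>0" using b_nonneg \<open>0 \<le> C\<close> \<open>0 < m\<close> by (simp add: \<alpha>0_def)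
  moreover have "V (closest_point Xi (y - \<alpha> *\<^sub>R s y)) \<le> max c0 (V y - \<alpha> * (m / 2))"
    if \<alpha>: "0 < \<alpha>" "\<alpha> \<le> \<alpha>0" and y: "y \<in> Xi" "V y \<le> c" for \<alpha> y
  proof -
    have "\<alpha> \<le> 1" "\<alpha> * (b + C + 1) \<le> 1" "\<alpha> * (2 * (C + 1)) \<le> m"
      using \<alpha> b_nonneg \<open>0 \<le> C\<close> by (simp_all add: \<alpha>0_def le_divide_eq mult.commute)
    have "infdist y A \<le> R" using R0 y by (fastforce simp: R_def cnbhd_def)
    then have step: "V (closest_point Xi (y - \<alpha> *\<^sub>R s y))
        \<le> V y - \<alpha> * frechet_derivative V (at y) (s y) + \<alpha> * (\<alpha> * C)"
      using C \<alpha> y \<open>\<alpha> \<le> 1\<close> by (simp add: step_descent_bound_def power2_eq_square mult.assoc)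
    show ?thesis
    proof (cases "infdist y A \<le> \<epsilon>")
      case True
      have "\<alpha> * (\<alpha> * C) \<le> \<alpha> * C"
        using \<alpha> \<open>\<alpha> \<le> 1\<close> \<open>0 \<le> C\<close> by (simp add: mult_left_le_one_le mult_nonneg_nonneg)
      moreover have "- b \<le> frechet_derivative V (at y) (s y)"
        using near y True by blast
      then have "- (\<alpha> * frechet_derivative V (at y) (s y)) \<le> \<alpha> * b"
        using mult_left_mono[of "- b" _ \<alpha>] \<alpha> by fastforce
      moreover have "\<alpha> * b + \<alpha> * C + \<alpha> \<le> 1"
        using \<open>\<alpha> * (b + C + 1) \<le> 1\<close> by (simp add: distrib_left)
      ultimately have "V (closest_point Xi (y - \<alpha> *\<^sub>R s y)) \<le> c0"
        using step near_level[rule_format, OF True] \<alpha> by linarith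
      then show ?thesis by simp
    next
      case False
      then have "m \<le> frechet_derivative V (at y) (s y)"
        using m y \<open>infdist y A \<le> R\<close> by simp
      then have "\<alpha> * m \<le> \<alpha> * frechet_derivative V (at y) (s y)"
        using \<alpha> by simp
      moreover have "\<alpha> * C \<le> m / 2"
        using \<open>\<alpha> * (2 * (C + 1)) \<le> m\<close> \<alpha> by (simp add: algebra_simps)
      then have "\<alpha> * (\<alpha> * C) \<le> \<alpha> * (m / 2)"
        using \<alpha> by simp
      ultimately have "V (closest_point Xi (y - \<alpha> *\<^sub>R s y)) \<le> V y - \<alpha> * (m / 2)"
        using step by (simp add: algebra_simps)
      then show ?thesis by simp
    qed
  qed
  ultimately show ?thesis
    using \<open>0 < m\<close> by (intro exI[of _ \<alpha>0] conjI exI[of _ "m / 2"] allI impI ballI) auto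
qed

lemma practically_stable_iteration:
  assumes level: "\<forall>y. infdist y A \<le> \<epsilon> + 1 \<longrightarrow> V y + 1 \<le> c0"
    and "0 < \<rho>" and sublevel: "\<forall>y. V y \<le> c0 \<longrightarrow> y \<in> cnbhd A \<rho>"
  shows "practically_stable A Xi s"
  unfolding practically_stable_def
proof (rule exI[of _ \<rho>], intro conjI allI impI)
  fix \<rho>s assume "\<rho> < \<rho>s"
  obtain \<alpha>0 \<kappa> where "0 < \<alpha>0" "0 < \<kappa>" and dec: "\<forall>y\<in>Xi. V y \<le> c0 \<longrightarrow>
      V (closest_point Xi (y - \<alpha>0 *\<^sub>R s y)) \<le> max c0 (V y - \<alpha>0 * \<kappa>)"
    using uniform_step_decrease[of c0 c0] level by fastforce
  have "y t \<in> cnbhd A \<rho>s \<inter> Xi"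
    if traj: "is_traj Xi s \<alpha>0 y" and "y 0 \<in> cnbhd A (\<epsilon> + 1)" for y t
  proof -
    have "V (y 0) \<le> c0" using level that(2) by (fastforce simp: cnbhd_def)
    then have "V (y t) \<le> max c0 (c0 - real t * (\<alpha>0 * \<kappa>))"
      using is_traj_sublevel_bound[OF traj closed_Xi _ order_refl _ dec] \<open>0 < \<alpha>0\<close> \<open>0 < \<kappa>\<close>
      by simp
    then have "V (y t) \<le> c0"
      using \<open>0 < \<alpha>0\<close> \<open>0 < \<kappa>\<close> by simp
    then show ?thesis
      using sublevel \<open>\<rho> < \<rho>s\<close> is_traj_in[OF closed_Xi traj] by (fastforce simp: cnbhd_def)
  qed
  then show "\<exists>\<delta>>0. \<exists>Ps. Ps \<noteq> {} \<and> Ps \<subseteq> {0<..} \<and> (\<forall>\<alpha>\<in>Ps. \<forall>y. is_traj Xi s \<alpha> y \<and>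
      y 0 \<in> cnbhd A \<delta> \<inter> Xi \<longrightarrow> (\<forall>t. y t \<in> cnbhd A \<rho>s \<inter> Xi))"
    using eps_nonneg \<open>0 < \<alpha>0\<close> by (intro exI[of _ "\<epsilon> + 1"] exI[of _ "{\<alpha>0}"]) auto
qed (fact \<open>0 < \<rho>\<close>)

lemma semiglobally_practically_attractive_iteration:
  assumes level: "\<forall>y. infdist y A \<le> \<epsilon> \<longrightarrow> V y + 1 \<le> c0" and "0 \<le> c0"
    and "0 < \<rho>" and sublevel: "\<forall>y. V y \<le> c0 \<longrightarrow> y \<in> cnbhd A \<rho>"
  shows "semiglobally_practically_attractive A Xi s"
  unfolding semiglobally_practically_attractive_def
proof (rule exI[of _ \<rho>], intro conjI allI impI)
  fix \<sigma> \<rho>a assume "\<rho>a < \<sigma> \<and> \<rho> < \<rho>a"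
  then have "\<rho> < \<rho>a" by simp
  obtain W where W: "\<forall>y\<in>cnbhd A \<sigma>. V y \<le> W"
    using bounded_above_on_cnbhd[OF V_cont compact_A A_ne] by blast
  define c where "c = max c0 W"
  obtain \<alpha>0 \<kappa> where "0 < \<alpha>0" "0 < \<kappa>" and dec: "\<forall>y\<in>Xi. V y \<le> c \<longrightarrow>
      V (closest_point Xi (y - \<alpha>0 *\<^sub>R s y)) \<le> max c0 (V y - \<alpha>0 * \<kappa>)"
    using uniform_step_decrease[of c0 c] level by fastforce
  obtain T :: nat where T: "c < real T * (\<alpha>0 * \<kappa>)"
    using reals_Archimedean3[of "\<alpha>0 * \<kappa>"] \<open>0 < \<alpha>0\<close> \<open>0 < \<kappa>\<close> by auto
  have "unif_attractive (cnbhd A \<rho>a) (cnbhd A \<sigma>) Xi s \<alpha>0"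
    unfolding unif_attractive_def
  proof (intro allI impI exI[of _ T])
    fix e :: real and y t assume "0 < e" "cnbhd (cnbhd A \<rho>a) e \<inter> Xi \<subseteq> cnbhd A \<sigma> \<inter> Xi"
      and y: "is_traj Xi s \<alpha>0 y \<and> y 0 \<in> cnbhd A \<sigma>" and "T \<le> t"
    have "V (y 0) \<le> c" using W y by (simp add: c_def le_max_iff_disj)
    then have "V (y t) \<le> max c0 (c - real t * (\<alpha>0 * \<kappa>))"
      using is_traj_sublevel_bound[OF _ closed_Xi _ _ _ dec] y \<open>0 < \<alpha>0\<close> \<open>0 < \<kappa>\<close>
      by (simp add: c_def)
    moreover have "real T * (\<alpha>0 * \<kappa>) \<le> real t * (\<alpha>0 * \<kappa>)"
      using \<open>T \<le> t\<close> \<open>0 < \<alpha>0\<close> \<open>0 < \<kappa>\<close> by (simp add: mult_right_mono)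
    ultimately have "V (y t) \<le> c0"
      using T \<open>0 \<le> c0\<close> by (simp add: le_max_iff_disj)
    then have "y t \<in> cnbhd A \<rho>a"
      using sublevel \<open>\<rho> < \<rho>a\<close> by (fastforce simp: cnbhd_def)
    then show "y t \<in> cnbhd (cnbhd A \<rho>a) e"
      using \<open>0 < e\<close> by (simp add: cnbhd_def)
  qed
  then show "\<exists>Pa. Pa \<noteq> {} \<and> Pa \<subseteq> {0<..} \<and>
      (\<forall>\<alpha>\<in>Pa. unif_attractive (cnbhd A \<rho>a) (cnbhd A \<sigma>) Xi s \<alpha>)"
    using \<open>0 < \<alpha>0\<close> by (intro exI[of _ "{\<alpha>0}"]) auto
qed (fact \<open>0 < \<rho>\<close>)

lemma SPAS_iteration: "SPAS A Xi s"
proof -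
  obtain W where W: "\<forall>y\<in>cnbhd A (\<epsilon> + 1). V y \<le> W"
    using bounded_above_on_cnbhd[OF V_cont compact_A A_ne] by blast
  define c0 where "c0 = W + 1"
  have level: "\<forall>y. infdist y A \<le> \<epsilon> + 1 \<longrightarrow> V y + 1 \<le> c0"
    using W by (simp add: cnbhd_def c0_def)
  obtain a where "a \<in> A" using A_ne by blast
  then have "0 \<le> c0"
    using level V_nonneg eps_nonneg by (metis add_increasing2 infdist_zero le_add_same_cancel2 zero_le_one order_trans)
  obtain \<rho> where "0 < \<rho>" "\<forall>y. V y \<le> c0 \<longrightarrow> y \<in> cnbhd A \<rho>"
    using sublevel_subset_cnbhd[OF V_rad] by blast
  moreover have "\<forall>y. infdist y A \<le> \<epsilon> \<longrightarrow> V y + 1 \<le> c0"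
    using level by simp
  ultimately show ?thesis
    unfolding SPAS_def
    using practically_stable_iteration[OF level] semiglobally_practically_attractive_iteration \<open>0 \<le> c0\<close>
    by blast
qed

end

lemma lipschitz_norm_bounded_on_cnbhd:
  fixes A Xi :: "'a::euclidean_space set" and s :: "'a \<Rightarrow> 'a"
  assumes "compact A" "A \<noteq> {}" "A \<subseteq> Xi" "0 \<le> R"
    and "\<forall>y1\<in>Xi \<inter> cnbhd A R. \<forall>y2\<in>Xi \<inter> cnbhd A R. norm (s y1 - s y2) \<le> L * norm (y1 - y2)"
    and "0 \<le> L"
  shows "\<exists>M\<ge>0. \<forall>y\<in>Xi. infdist y A \<le> R \<longrightarrow> norm (s y) \<le> M"
proof -
  obtain a where "a \<in> A" using assms(2) by blast
  then have "a \<in> Xi \<inter> cnbhd A R" using assms(3,4) by (auto simp: cnbhd_def)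
  moreover have "bounded (Xi \<inter> cnbhd A R)"
    using compact_imp_bounded[OF compact_cnbhd[OF assms(1,2)]] by (rule bounded_subset) auto
  ultimately obtain M where "0 \<le> M" "\<forall>y\<in>Xi \<inter> cnbhd A R. norm (s y) \<le> M"
    using norm_bounded_if_lipschitz_at[of "Xi \<inter> cnbhd A R" a L s] assms(5,6) by blast
  then show ?thesis by (auto simp: cnbhd_def)
qed

theorem theorem3:
  fixes A Xi :: "'a::euclidean_space set"
    and V :: "'a \<Rightarrow> real" and Psi :: "'a \<Rightarrow> 'a set" and s :: "'a \<Rightarrow> 'a"
  assumes A_ne: "A \<noteq> {}" and A_cpt: "compact A"
    and V_nonneg: "\<forall>x. V x \<ge> 0"
    and settings:
      "(Xi \<noteq> {} \<and> closed Xi \<and> convex Xi \<and> convex A \<and>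
          V = (\<lambda>y. (1/2) * (norm (y - closest_point A y))\<^sup>2))
       \<or> (Xi = UNIV \<and>
          (\<exists>gV::'a \<Rightarrow> 'a. (\<forall>y. (V has_derivative (\<lambda>h. gV y \<bullet> h)) (at y)) \<and>
             continuous_on UNIV gV \<and>
             (\<forall>x. \<exists>e>0. \<exists>L. L-lipschitz_on (ball x e) gV)) \<and>
          pos_def_wrt V A \<and> rad_unbounded_on V A UNIV)"
    and spsp: "SPSP Psi V A Xi"
    and single: "\<forall>y\<in>Xi. Psi y = {s y}"
    and lip: "\<forall>\<sigma>>0. \<exists>L>0. \<forall>y1\<in>Xi \<inter> cnbhd A \<sigma>. \<forall>y2\<in>Xi \<inter> cnbhd A \<sigma>.
                 norm (s y1 - s y2) \<le> L * norm (y1 - y2)"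
  shows "SPAS A Xi s"
proof -
  have V_diff: "\<forall>y. V differentiable (at y)" and V_rad: "rad_unbounded_on V A UNIV"
    and "strictly_contains Xi A"
    using spsp unfolding SPSP_def by auto
  then have "A \<subseteq> Xi" unfolding strictly_contains_def by fastforce
  have "closed Xi" using settings by auto
  obtain \<epsilon> b where bounds: "0 \<le> \<epsilon>" "0 \<le> b"
      "\<forall>y\<in>Xi. infdist y A \<le> \<epsilon> \<longrightarrow> - b \<le> frechet_derivative V (at y) (s y)"
      "\<forall>\<sigma>>\<epsilon>. \<exists>m>0. \<forall>y\<in>Xi. \<epsilon> \<le> infdist y A \<and> infdist y A \<le> \<sigma> \<longrightarrow>
         m \<le> frechet_derivative V (at y) (s y)"
    using SPSP_single_valued_bounds[OF spsp A_cpt A_ne \<open>closed Xi\<close> single] by blast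
  have "\<exists>C\<ge>0. step_descent_bound A Xi V s R C" if "0 < R" for R
  proof -
    obtain L where "0 < L" and L: "\<forall>y1\<in>Xi \<inter> cnbhd A R. \<forall>y2\<in>Xi \<inter> cnbhd A R.
        norm (s y1 - s y2) \<le> L * norm (y1 - y2)"
      using lip \<open>0 < R\<close> by blast
    obtain M where "0 \<le> M" and s_bound: "\<forall>y\<in>Xi. infdist y A \<le> R \<longrightarrow> norm (s y) \<le> M"
      using lipschitz_norm_bounded_on_cnbhd[OF A_cpt A_ne \<open>A \<subseteq> Xi\<close> _ L] \<open>0 < R\<close> \<open>0 < L\<close>
      by auto
    from settings show ?thesis
    proof (elim disjE conjE exE)
      assume "convex Xi" "V = (\<lambda>y. (1/2) * (norm (y - closest_point A y))\<^sup>2)"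
      from step_descent_bound_half_sq_dist[OF compact_imp_closed[OF A_cpt] A_ne this(1)
          \<open>closed Xi\<close> \<open>A \<subseteq> Xi\<close> this(2) V_diff s_bound]
      show ?thesis by (intro exI[of _ "M\<^sup>2 / 2"]) simp
    next
      fix gV assume "Xi = UNIV" "\<forall>y. (V has_derivative (\<lambda>h. gV y \<bullet> h)) (at y)"
        "\<forall>x. \<exists>e>0. \<exists>L. L-lipschitz_on (ball x e) gV"
      with step_descent_bound_lipschitz_gradient[OF A_cpt A_ne _ _ \<open>0 \<le> M\<close>] s_bound
      show ?thesis by simp
    qed
  qed
  moreover have "continuous_on UNIV V"
    using V_diff by (meson continuous_at_imp_continuous_on differentiable_imp_continuous_within)
  ultimately interpret practical_descent A Xi V s \<epsilon> b
    using A_cpt A_ne \<open>closed Xi\<close> V_nonneg V_rad bounds by unfold_locales auto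
  show ?thesis by (rule SPAS_iteration)
qed

end
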